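(* $\mathrm{Md}\cup\mathrm{Signs}$ is a finite complete axiomatisation of $\mathrm{Mod}_{\Sigma_{ms}}(\mathrm{Md}\cup\mathrm{Signs}\cup\mathrm{IL})$: for all $\Sigma_{ms}$-terms $r,s$, $\mathrm{Md}\cup\mathrm{Signs}\vdash r=s$ if and only if $r=s$ holds in every $\Sigma_{ms}$-structure satisfying $\mathrm{Md}$, $\mathrm{Signs}$ and $\mathrm{IL}$.
   Context: $\Sigma_{ms}=(0,1,+,\cdot,-,{}^{-1},\mathbf s)$ extends $\Sigma_m=(0,1,+,\cdot,-,{}^{-1})$ with a unary function $\mathbf s$. $\mathrm{Md}$ is the set of equations $(x+y)+z=x+(y+z)$, $x+y=y+x$, $x+0=x$, $x+(-x)=0$, $(x\cdot y)\cdot z=x\cdot(y\cdot z)$, $x\cdot y=y\cdot x$, $1\cdot x=x$, $x\cdot(y+z)=x\cdot y+x\cdot z$, $(x^{-1})^{-1}=x$, $x\cdot(x\cdot x^{-1})=x$. $1_t$ abbreviates $t\cdot t^{-1}$, $0_t$ abbreviates $1-1_t$, $t-u$ abbreviates $t+(-u)$. $\mathrm{Signs}$ is the set of equations: $\mathbf s(1_x)=1_x$; $\mathbf s(0_x)=0_x$; $\mathbf s(-1)=-1$; $\mathbf s(x^{-1})=\mathbf s(x)$; $\mathbf s(x\cdot y)=\mathbf s(x)\cdot\mathbf s(y)$; $0_{\mathbf s(x)-\mathbf s(y)}\cdot(\mathbf s(x+y)-\mathbf s(x))=0$. The inverse law $\mathrm{IL}$ is the conditional axiom $x\neq 0\rightarrow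 x\cdot x^{-1}=1$. $\vdash$ is derivability in equational logic. *)

theory Defs
  imports Main
begin

datatype tm =
    Var nat
  | Zero
  | One
  | Plus tm tm
  | Times tm tm
  | Neg tm
  | Inv tm
  | Sgn tm

definition one_of :: "tm \<Rightarrow> tm" where "one_of t = Times t (Inv t)"
definition zero_of :: "tm \<Rightarrow> tm" where "zero_of t = Plus One (Neg (one_of t))"
definition minus_tm :: "tm \<Rightarrow> tm \<Rightarrow> tm" where "minus_tm t u = Plus t (Neg u)"

abbreviation "x \<equiv> Var 0"
abbreviation "y \<equiv> Var 1"
abbreviation "z \<equiv> Var 2"

definition Md :: "(tm \<times> tm) set" where
  "Md = {
     (Plus (Plus x y) z, Plus x (Plus y z)),
     (Plus x y, Plus y x),
     (Plus x Zero, x),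
     (Plus x (Neg x), Zero),
     (Times (Times x y) z, Times x (Times y z)),
     (Times x y, Times y x),
     (Times One x, x),
     (Times x (Plus y z), Plus (Times x y) (Times x z)),
     (Inv (Inv x), x),
     (Times x (Times x (Inv x)), x) }"

definition Signs :: "(tm \<times> tm) set" where
  "Signs = {
     (Sgn (one_of x), one_of x),
     (Sgn (zero_of x), zero_of x),
     (Sgn (Neg One), Neg One),
     (Sgn (Inv x), Sgn x),
     (Sgn (Times x y), Times (Sgn x) (Sgn y)),
     (Times (zero_of (minus_tm (Sgn x) (Sgn y))) (minus_tm (Sgn (Plus x y)) (Sgn x)), Zero) }"

primrec subst :: "(nat \<Rightarrow> tm) \<Rightarrow> tm \<Rightarrow> tm" where
  "subst \<sigma> (Var n) = \<sigma> n"
| "subst \<sigma> Zero = Zero"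
| "subst \<sigma> One = One"
| "subst \<sigma> (Plus a b) = Plus (subst \<sigma> a) (subst \<sigma> b)"
| "subst \<sigma> (Times a b) = Times (subst \<sigma> a) (subst \<sigma> b)"
| "subst \<sigma> (Neg a) = Neg (subst \<sigma> a)"
| "subst \<sigma> (Inv a) = Inv (subst \<sigma> a)"
| "subst \<sigma> (Sgn a) = Sgn (subst \<sigma> a)"

inductive derivable :: "(tm \<times> tm) set \<Rightarrow> tm \<Rightarrow> tm \<Rightarrow> bool" for E where
  ax: "(l, r) \<in> E \<Longrightarrow> derivable E (subst \<sigma> l) (subst \<sigma> r)"
| refl: "derivable E t t"
| sym: "derivable E t u \<Longrightarrow> derivable E u t"
| trans: "derivable E t u \<Longrightarrow> derivable E u v \<Longrightarrow> derivable E t v"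
| cong_Plus: "derivable E a a' \<Longrightarrow> derivable E b b' \<Longrightarrow> derivable E (Plus a b) (Plus a' b')"
| cong_Times: "derivable E a a' \<Longrightarrow> derivable E b b' \<Longrightarrow> derivable E (Times a b) (Times a' b')"
| cong_Neg: "derivable E a a' \<Longrightarrow> derivable E (Neg a) (Neg a')"
| cong_Inv: "derivable E a a' \<Longrightarrow> derivable E (Inv a) (Inv a')"
| cong_Sgn: "derivable E a a' \<Longrightarrow> derivable E (Sgn a) (Sgn a')"

record 'a ms_struct =
  carrier :: "'a set"
  zero :: 'a
  one :: 'a
  add :: "'a \<Rightarrow> 'a \<Rightarrow> 'a"
  mul :: "'a \<Rightarrow> 'a \<Rightarrow> 'a"
  neg :: "'a \<Rightarrow> 'a"
  inv :: "'a \<Rightarrow> 'a"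
  sgn :: "'a \<Rightarrow> 'a"

definition is_struct :: "'a ms_struct \<Rightarrow> bool" where
  "is_struct M \<longleftrightarrow> carrier M \<noteq> {} \<and>
     zero M \<in> carrier M \<and> one M \<in> carrier M \<and>
     (\<forall>a\<in>carrier M. \<forall>b\<in>carrier M. add M a b \<in> carrier M \<and> mul M a b \<in> carrier M) \<and>
     (\<forall>a\<in>carrier M. neg M a \<in> carrier M \<and> inv M a \<in> carrier M \<and> sgn M a \<in> carrier M)"

primrec eval :: "'a ms_struct \<Rightarrow> (nat \<Rightarrow> 'a) \<Rightarrow> tm \<Rightarrow> 'a" where
  "eval M v (Var n) = v n"
| "eval M v Zero = zero M"
| "eval M v One = one M"
| "eval M v (Plus a b) = add M (eval M v a) (eval M v b)"
| "eval M v (Times a b) = mul M (eval M v a) (eval M v b)"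
| "eval M v (Neg a) = neg M (eval M v a)"
| "eval M v (Inv a) = inv M (eval M v a)"
| "eval M v (Sgn a) = sgn M (eval M v a)"

definition holds :: "'a ms_struct \<Rightarrow> tm \<Rightarrow> tm \<Rightarrow> bool" where
  "holds M t u \<longleftrightarrow> (\<forall>v. (\<forall>n. v n \<in> carrier M) \<longrightarrow> eval M v t = eval M v u)"

definition satisfies_eqs :: "'a ms_struct \<Rightarrow> (tm \<times> tm) set \<Rightarrow> bool" where
  "satisfies_eqs M E \<longleftrightarrow> (\<forall>(l, r)\<in>E. holds M l r)"

definition satisfies_IL :: "'a ms_struct \<Rightarrow> bool" where
  "satisfies_IL M \<longleftrightarrow> (\<forall>a\<in>carrier M. a \<noteq> zero M \<longrightarrow> mul M a (inv M a) = one M)"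

definition is_model :: "'a ms_struct \<Rightarrow> bool" where
  "is_model M \<longleftrightarrow> is_struct M \<and> satisfies_eqs M (Md \<union> Signs) \<and> satisfies_IL M"

end

theory Submission
  imports Defs "HOL-Library.Countable" Complex_Main
begin

(* Soundness is the usual induction over derivations; the real numbers with
   inverse and sign show that 0 = 1 is not derivable.

   Completeness: if r = s is not derivable, the term algebra modulo provable
   equality is a nontrivial commutative ring in which c = [r] - [s] is nonzero,
   and Md + Signs make it a "signed meadow" (a ring with an involutive inverse
   satisfying a (a a^-1) = a and a multiplicative sign fixing the idempotents
   0_a = 1 - a a^-1).  By Zorn's lemma some ideal I is maximal among those
   avoiding c.  In a meadow every ideal is radical, so such an I behaves like
   a prime ideal on the annihilating pair a * 0_a = 0; hence 0_a is in I for
   every a outside I, i.e. the quotient satisfies IL.  Inverse and sign respect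
   congruence modulo any ideal, so the quotient is a model of Md + Signs + IL
   in which r = s fails.  Finally, the quotient is countable and is copied
   into a structure on nat. *)

lemma eval_closed:
  assumes "is_struct M" and "\<forall>n. v n \<in> carrier M"
  shows "eval M v t \<in> carrier M"
  using assms by (induction t) (auto simp: is_struct_def)

lemma eval_subst: "eval M v (subst \<sigma> t) = eval M (\<lambda>k. eval M v (\<sigma> k)) t"
  by (induction t) auto

lemma derivable_sound:
  assumes "derivable E r s" and "is_struct M" and "satisfies_eqs M E"
  shows "holds M r s"
  using assms
proof (induction rule: derivable.induct)
  case (ax l r \<sigma>)
  show ?case unfolding holds_def
  proof (intro allI impI)
    fix v :: "nat \<Rightarrow> _" assume v: "\<forall>n. v n \<in> carrier M"
    have "holds M l r" using ax unfolding satisfies_eqs_def by auto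
    moreover have "\<forall>k. eval M v (\<sigma> k) \<in> carrier M" using eval_closed[OF ax(2) v] by auto
    ultimately show "eval M v (subst \<sigma> l) = eval M v (subst \<sigma> r)"
      unfolding eval_subst holds_def by auto
  qed
qed (auto simp: holds_def)

text \<open>The real numbers with \<open>0\<^sup>-\<^sup>1 = 0\<close> and the usual sign function form a model;
  hence \<open>0 = 1\<close> is not derivable, which makes the term algebra nontrivial.\<close>

definition real_struct :: "real ms_struct" where
  "real_struct = \<lparr>carrier = UNIV, zero = 0, one = 1, add = (+), mul = (*),
     neg = uminus, inv = inverse, sgn = sgn_class.sgn\<rparr>"

lemma real_struct_model: "is_model real_struct"
proof -
  have [simp]: "(a::real) * inverse a = (if a = 0 then 0 else 1)" for a by simp
  have "satisfies_eqs real_struct (Md \<union> Signs)"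
    unfolding satisfies_eqs_def Md_def Signs_def holds_def
    by (simp add: real_struct_def one_of_def zero_of_def minus_tm_def algebra_simps)
      (auto simp: sgn_if zero_less_mult_iff mult_less_0_iff)
  then show ?thesis
    by (simp add: is_model_def is_struct_def satisfies_IL_def real_struct_def)
qed

lemma not_derivable_zero_one: "\<not> derivable (Md \<union> Signs) Zero One"
proof
  assume "derivable (Md \<union> Signs) Zero One"
  then have "holds real_struct Zero One"
    using derivable_sound real_struct_model by (auto simp: is_model_def)
  then show False by (simp add: holds_def real_struct_def)
qed

definition ideal :: "'a::comm_ring_1 set \<Rightarrow> bool" where
  "ideal I \<longleftrightarrow> 0 \<in> I \<and> (\<forall>a\<in>I. \<forall>b\<in>I. a + b \<in> I) \<and> (\<forall>a\<in>I. \<forall>t. t * a \<in> I)"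

context
  fixes I :: "'a::comm_ring_1 set"
  assumes I: "ideal I"
begin

lemma ideal_zero: "0 \<in> I"
  using I by (simp add: ideal_def)

lemma ideal_add: "a \<in> I \<Longrightarrow> b \<in> I \<Longrightarrow> a + b \<in> I"
  using I by (simp add: ideal_def)

lemma ideal_mult_left: "a \<in> I \<Longrightarrow> t * a \<in> I"
  using I by (simp add: ideal_def)

lemma ideal_mult_right: "a \<in> I \<Longrightarrow> a * t \<in> I"
  using ideal_mult_left by (simp add: mult.commute)

lemma ideal_uminus: "a \<in> I \<Longrightarrow> - a \<in> I"
  using ideal_mult_left[of a "- 1"] by simp

lemma ideal_diff: "a \<in> I \<Longrightarrow> b \<in> I \<Longrightarrow> a - b \<in> I"
  using ideal_add[of a "- b"] ideal_uminus[of b] by simp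

lemma ideal_cong_add: "a - a' \<in> I \<Longrightarrow> b - b' \<in> I \<Longrightarrow> (a + b) - (a' + b') \<in> I"
  using ideal_add[of "a - a'" "b - b'"] by (simp add: algebra_simps)

lemma ideal_cong_mult: "a - a' \<in> I \<Longrightarrow> b - b' \<in> I \<Longrightarrow> a * b - a' * b' \<in> I"
  using ideal_add[OF ideal_mult_right[of "a - a'" b] ideal_mult_left[of "b - b'" a']]
  by (simp add: algebra_simps)

lemma ideal_cong_uminus: "a - a' \<in> I \<Longrightarrow> - a - - a' \<in> I"
  using ideal_uminus[of "a - a'"] by (simp add: algebra_simps)

end

definition maximal_avoiding :: "'a::comm_ring_1 set \<Rightarrow> 'a \<Rightarrow> bool" where
  "maximal_avoiding I c \<longleftrightarrow>
     ideal I \<and> c \<notin> I \<and> (\<forall>J. ideal J \<and> c \<notin> J \<and> I \<subseteq> J \<longrightarrow> J = I)"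

lemma exists_maximal_avoiding:
  fixes c :: "'a::comm_ring_1"
  assumes "c \<noteq> 0"
  shows "\<exists>I. maximal_avoiding I c"
proof -
  let ?S = "{J. ideal J \<and> c \<notin> J}"
  have "{0} \<in> ?S" using assms by (simp add: ideal_def)
  then have "\<exists>I\<in>?S. \<forall>J\<in>?S. I \<subseteq> J \<longrightarrow> J = I"
  proof (rule subset_Zorn_nonempty[OF ex_in_conv[THEN iffD1, OF exI]])
    fix C assume "C \<noteq> {}" and "subset.chain ?S C"
    then have C: "C \<subseteq> ?S" and tot: "\<forall>X\<in>C. \<forall>Y\<in>C. X \<subseteq> Y \<or> Y \<subseteq> X" and ne: "C \<noteq> {}"
      by (auto simp: subset_chain_def)
    have "ideal (\<Union>C)"
      unfolding ideal_def
    proof (intro conjI ballI allI)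
      show "0 \<in> \<Union>C" using ne C ideal_zero by blast
    next
      fix a b assume "a \<in> \<Union>C" "b \<in> \<Union>C"
      then obtain A B where "A \<in> C" "B \<in> C" "a \<in> A" "b \<in> B" by blast
      with tot C show "a + b \<in> \<Union>C"
        by (metis (no_types, lifting) UnionI ideal_add mem_Collect_eq subset_iff)
    next
      fix a t assume "a \<in> \<Union>C"
      then show "t * a \<in> \<Union>C" using C ideal_mult_left by blast
    qed
    then show "\<Union>C \<in> ?S" using C by blast
  qed
  then show ?thesis unfolding maximal_avoiding_def by blast
qed

lemma maximal_avoiding_generates:
  assumes max: "maximal_avoiding I c" and g: "g \<notin> I"
  shows "\<exists>i\<in>I. \<exists>t. c = i + t * g"
proof (rule ccontr)
  assume nc: "\<not> (\<exists>i\<in>I. \<exists>t. c = i + t * g)"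
  have I: "ideal I" and cI: "c \<notin> I" using max by (auto simp: maximal_avoiding_def)
  define J where "J = {i + t * g | i t. i \<in> I}"
  have "ideal J" unfolding ideal_def J_def
  proof (intro conjI ballI allI)
    show "0 \<in> {i + t * g |i t. i \<in> I}"
      using ideal_zero[OF I] by (intro CollectI exI[of _ 0]) auto
  next
    fix p q assume "p \<in> {i + t * g |i t. i \<in> I}" "q \<in> {i + t * g |i t. i \<in> I}"
    then obtain i t j u where "p = i + t * g" "q = j + u * g" "i \<in> I" "j \<in> I" by blast
    then show "p + q \<in> {i + t * g |i t. i \<in> I}"
      using ideal_add[OF I, of i j]
      by (intro CollectI exI[of _ "i + j"] exI[of _ "t + u"]) (auto simp: algebra_simps)
  next
    fix p s assume "p \<in> {i + t * g |i t. i \<in> I}"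
    then obtain i t where "p = i + t * g" "i \<in> I" by blast
    then show "s * p \<in> {i + t * g |i t. i \<in> I}"
      using ideal_mult_left[OF I, of i s]
      by (intro CollectI exI[of _ "s * i"] exI[of _ "s * t"]) (auto simp: algebra_simps)
  qed
  moreover have "c \<notin> J" using nc unfolding J_def by blast
  moreover have "I \<subseteq> J" unfolding J_def by (force intro: exI[of _ 0])
  ultimately have "J = I" using max by (auto simp: maximal_avoiding_def)
  moreover have "g \<in> J" unfolding J_def using ideal_zero[OF I] by (force intro: exI[of _ 1])
  ultimately show False using g by blast
qed

lemma maximal_avoiding_square:
  assumes max: "maximal_avoiding I c" and pq: "p * q \<in> I" and "p \<notin> I" "q \<notin> I"
  shows "c * c \<in> I"
proof -
  have I: "ideal I" using max by (simp add: maximal_avoiding_def)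
  obtain i t where i: "i \<in> I" and ci: "c = i + t * p"
    using maximal_avoiding_generates[OF max \<open>p \<notin> I\<close>] by blast
  obtain j u where j: "j \<in> I" and cj: "c = j + u * q"
    using maximal_avoiding_generates[OF max \<open>q \<notin> I\<close>] by blast
  have "c * c = (i + t * p) * (j + u * q)"
    by (rule arg_cong2[where f = "(*)", OF ci cj])
  also have "\<dots> = i * (j + u * q) + (t * p) * j + (t * u) * (p * q)"
    by (simp add: algebra_simps)
  finally show ?thesis
    using I i j pq by (simp add: ideal_add ideal_mult_left ideal_mult_right)
qed

definition mod_rep :: "'a::comm_ring_1 set \<Rightarrow> 'a \<Rightarrow> 'a" where
  "mod_rep I a = (SOME b. a - b \<in> I)"

context
  fixes I :: "'a::comm_ring_1 set"
  assumes I: "ideal I"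
begin

lemma mod_rep_diff: "a - mod_rep I a \<in> I"
  unfolding mod_rep_def by (rule someI[of _ a]) (simp add: ideal_zero[OF I])

lemma mod_rep_eq_iff: "mod_rep I a = mod_rep I b \<longleftrightarrow> a - b \<in> I"
proof
  assume "mod_rep I a = mod_rep I b"
  then show "a - b \<in> I"
    using ideal_diff[OF I mod_rep_diff[of a] mod_rep_diff[of b]] by simp
next
  assume ab: "a - b \<in> I"
  have "a - c \<in> I \<longleftrightarrow> b - c \<in> I" for c
    using ideal_diff[OF I _ ab, of "a - c"] ideal_add[OF I ab, of "b - c"] by auto
  then show "mod_rep I a = mod_rep I b" unfolding mod_rep_def by simp
qed

lemma mod_rep_mod_rep: "mod_rep I (mod_rep I a) = mod_rep I a"
  using mod_rep_eq_iff ideal_uminus[OF I mod_rep_diff[of a]] by simp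

lemma mod_rep_cong1:
  assumes "\<And>a b. a - b \<in> I \<Longrightarrow> f a - f b \<in> I"
  shows "mod_rep I (f (mod_rep I a)) = mod_rep I (f a)"
  using assms mod_rep_eq_iff mod_rep_mod_rep by metis

lemma mod_rep_cong2:
  assumes "\<And>a a' b b'. a - a' \<in> I \<Longrightarrow> b - b' \<in> I \<Longrightarrow> f a b - f a' b' \<in> I"
  shows "mod_rep I (f (mod_rep I a) (mod_rep I b)) = mod_rep I (f a b)"
  using assms mod_rep_eq_iff mod_rep_mod_rep by metis

end

lemma pseudo_inverse_unique:
  fixes a b c :: "'a::comm_monoid_mult"
  assumes ab: "a * b * a = a" "b * a * b = b" and ac: "a * c * a = a" "c * a * c = c"
  shows "b = c"
proof -
  have "a * b = (a * c * a) * b" using ac by simp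
  also have "\<dots> = (a * b * a) * c" by (simp add: ac_simps)
  also have "\<dots> = a * c" using ab by simp
  finally have abc: "a * b = a * c" .
  have "b = b * (a * b)" using ab by (simp add: ac_simps)
  also have "\<dots> = b * (a * c)" using abc by simp
  also have "\<dots> = (a * b) * c" by (simp add: ac_simps)
  also have "\<dots> = (a * c) * c" using abc by simp
  also have "\<dots> = c" using ac by (simp add: ac_simps)
  finally show ?thesis .
qed

locale meadow =
  fixes minv :: "'a::comm_ring_1 \<Rightarrow> 'a"
  assumes minv_minv: "minv (minv a) = a"
    and mult_minv: "a * (a * minv a) = a"
begin

lemma minv_pseudo_inverse: "a * minv a * a = a" "minv a * a * minv a = minv a"
  using mult_minv[of a] mult_minv[of "minv a"] by (simp_all add: minv_minv ac_simps)

lemma minv_mult: "minv (a * b) = minv a * minv b"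
proof (rule pseudo_inverse_unique[OF minv_pseudo_inverse[of "a * b"]])
  have "a * b * (minv a * minv b) * (a * b) = (a * minv a * a) * (b * minv b * b)"
    by (simp add: ac_simps)
  then show "a * b * (minv a * minv b) * (a * b) = a * b"
    by (simp add: minv_pseudo_inverse)
  have "minv a * minv b * (a * b) * (minv a * minv b) =
        (minv a * a * minv a) * (minv b * b * minv b)"
    by (simp add: ac_simps)
  then show "minv a * minv b * (a * b) * (minv a * minv b) = minv a * minv b"
    by (simp add: minv_pseudo_inverse)
qed

lemma minv_idempotent: "e * e = e \<Longrightarrow> minv e = e"
  by (rule pseudo_inverse_unique[OF minv_pseudo_inverse[of e]]) simp_all

definition zero_idem :: "'a \<Rightarrow> 'a" where
  "zero_idem a = 1 - a * minv a"

lemma mult_zero_idem: "a * zero_idem a = 0"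
  using mult_minv[of a] by (simp add: zero_idem_def algebra_simps)

lemma zero_idem_idempotent: "zero_idem a * zero_idem a = zero_idem a"
proof -
  have "(a * minv a) * (a * minv a) = (a * (a * minv a)) * minv a"
    by (simp add: ac_simps)
  then have "(a * minv a) * (a * minv a) = a * minv a"
    by (simp add: mult_minv)
  then show ?thesis by (simp add: zero_idem_def algebra_simps)
qed

lemma minv_zero_idem: "minv (zero_idem a) = zero_idem a"
  by (rule minv_idempotent[OF zero_idem_idempotent])

text \<open>A multiplicative map fixing \<open>0\<^sub>d\<close> respects congruence modulo any ideal
  containing \<open>d\<close>: multiplying by \<open>0\<^sub>d\<close> identifies the two sides, and the
  complementary idempotent \<open>d d\<^sup>-\<^sup>1\<close> lies in the ideal.\<close>

lemma multiplicative_respects_ideal: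
  assumes I: "ideal I" and d: "a - b \<in> I"
    and mult: "\<And>x y. g (x * y) = g x * g y"
    and fix0: "g (zero_idem (a - b)) = zero_idem (a - b)"
  shows "g a - g b \<in> I"
proof -
  define f where "f = zero_idem (a - b)"
  have "f * a = f * b"
    using mult_zero_idem[of "a - b"] by (simp add: f_def algebra_simps)
  then have "f * g a = f * g b"
    using mult[of f a] mult[of f b] fix0 by (simp add: f_def)
  then have "g a - g b = (g a - g b) * ((a - b) * minv (a - b))"
    by (simp add: f_def zero_idem_def algebra_simps)
  then show ?thesis
    using ideal_mult_left[OF I ideal_mult_right[OF I d]] by metis
qed

lemma minv_respects_ideal: "ideal I \<Longrightarrow> a - b \<in> I \<Longrightarrow> minv a - minv b \<in> I"
  by (rule multiplicative_respects_ideal) (simp_all add: minv_mult minv_zero_idem)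

lemma ideal_radical:
  fixes c :: 'a
  shows "ideal I \<Longrightarrow> c * c \<in> I \<Longrightarrow> c \<in> I"
  using ideal_mult_right[of I "c * c" "minv c"] mult_minv[of c] by (simp add: ac_simps)

text \<open>Modulo a maximal ideal avoiding some element, every \<open>a \<notin> I\<close> becomes
  invertible: \<open>a \<cdot> 0\<^sub>a = 0\<close>, so by primality \<open>0\<^sub>a \<in> I\<close>.\<close>

lemma maximal_avoiding_inverse_law:
  assumes max: "maximal_avoiding I c" and a: "a \<notin> I"
  shows "zero_idem a \<in> I"
proof (rule ccontr)
  assume "zero_idem a \<notin> I"
  moreover have "ideal I" and "c \<notin> I" using max by (auto simp: maximal_avoiding_def)
  ultimately show False
    using maximal_avoiding_square[OF max _ a] ideal_zero ideal_radical mult_zero_idem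
    by metis
qed

end

text \<open>A signed meadow additionally carries a multiplicative sign function
  fixing the idempotents \<open>0\<^sub>a\<close>; these are the only sign axioms needed to pass
  to quotients.\<close>

locale signed_meadow = meadow minv for minv :: "'a::comm_ring_1 \<Rightarrow> 'a" +
  fixes msgn :: "'a \<Rightarrow> 'a"
  assumes msgn_zero_idem: "msgn (1 - a * minv a) = 1 - a * minv a"
    and msgn_mult: "msgn (a * b) = msgn a * msgn b"
begin

lemma msgn_respects_ideal: "ideal I \<Longrightarrow> a - b \<in> I \<Longrightarrow> msgn a - msgn b \<in> I"
  by (rule multiplicative_respects_ideal) (simp_all add: msgn_mult msgn_zero_idem zero_idem_def)

definition ring_struct :: "'a ms_struct" where
  "ring_struct = \<lparr>carrier = UNIV, zero = 0, one = 1, add = (+), mul = (*),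
     neg = uminus, inv = minv, sgn = msgn\<rparr>"

definition quot_struct :: "'a set \<Rightarrow> 'a ms_struct" where
  "quot_struct I = \<lparr>carrier = range (mod_rep I), zero = mod_rep I 0, one = mod_rep I 1,
     add = \<lambda>a b. mod_rep I (a + b), mul = \<lambda>a b. mod_rep I (a * b),
     neg = \<lambda>a. mod_rep I (- a), inv = \<lambda>a. mod_rep I (minv a), sgn = \<lambda>a. mod_rep I (msgn a)\<rparr>"

lemma eval_quot_struct:
  assumes I: "ideal I"
  shows "eval (quot_struct I) (\<lambda>n. mod_rep I (w n)) t = mod_rep I (eval ring_struct w t)"
proof (induction t)
  case (Plus t u)
  then show ?case
    by (simp add: quot_struct_def ring_struct_def mod_rep_cong2[OF I, where f = "(+)", OF ideal_cong_add[OF I]])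
next
  case (Times t u)
  then show ?case
    by (simp add: quot_struct_def ring_struct_def mod_rep_cong2[OF I, where f = "(*)", OF ideal_cong_mult[OF I]])
next
  case (Neg t)
  then show ?case
    by (simp add: quot_struct_def ring_struct_def mod_rep_cong1[OF I, where f = "uminus", OF ideal_cong_uminus[OF I]])
next
  case (Inv t)
  then show ?case
    by (simp add: quot_struct_def ring_struct_def mod_rep_cong1[OF I, where f = "minv", OF minv_respects_ideal[OF I]])
next
  case (Sgn t)
  then show ?case
    by (simp add: quot_struct_def ring_struct_def mod_rep_cong1[OF I, where f = "msgn", OF msgn_respects_ideal[OF I]])
qed (simp_all add: quot_struct_def ring_struct_def)

lemma quot_struct_satisfies:
  assumes I: "ideal I" and E: "satisfies_eqs ring_struct E"
  shows "satisfies_eqs (quot_struct I) E"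
  unfolding satisfies_eqs_def holds_def
proof (intro ballI allI impI, clarify)
  fix l r and v :: "nat \<Rightarrow> 'a" assume lr: "(l, r) \<in> E" and v: "\<forall>n. v n \<in> carrier (quot_struct I)"
  have "v = (\<lambda>n. mod_rep I (v n))"
  proof
    fix n
    from v obtain a where "v n = mod_rep I a" by (auto simp: quot_struct_def)
    then show "v n = mod_rep I (v n)" by (simp add: mod_rep_mod_rep[OF I])
  qed
  moreover have "eval ring_struct v l = eval ring_struct v r"
    using E lr by (auto simp: satisfies_eqs_def holds_def ring_struct_def)
  ultimately show "eval (quot_struct I) v l = eval (quot_struct I) v r"
    using eval_quot_struct[OF I, of v] by metis
qed

lemma quot_struct_inverse_law:
  assumes max: "maximal_avoiding I c"
  shows "satisfies_IL (quot_struct I)"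
  unfolding satisfies_IL_def
proof (intro ballI impI)
  have I: "ideal I" using max by (simp add: maximal_avoiding_def)
  fix n assume "n \<in> carrier (quot_struct I)" and nz: "n \<noteq> zero (quot_struct I)"
  then obtain a where n: "n = mod_rep I a" by (auto simp: quot_struct_def)
  then have "a \<notin> I" using nz mod_rep_eq_iff[OF I, of a 0] by (simp add: quot_struct_def)
  then have "1 - a * minv a \<in> I"
    using maximal_avoiding_inverse_law[OF max] by (simp add: zero_idem_def)
  then have "mod_rep I (a * minv a) = mod_rep I 1"
    using mod_rep_eq_iff[OF I] ideal_uminus[OF I] by fastforce
  then show "mul (quot_struct I) n (inv (quot_struct I) n) = one (quot_struct I)"
    using eval_quot_struct[OF I, of "\<lambda>_. a" "Times x (Inv x)"] n
    by (simp add: quot_struct_def ring_struct_def)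
qed

lemma quot_struct_model:
  assumes "maximal_avoiding I c" and "satisfies_eqs ring_struct (Md \<union> Signs)"
  shows "is_model (quot_struct I)"
  using assms quot_struct_satisfies quot_struct_inverse_law
  by (auto simp: is_model_def is_struct_def quot_struct_def maximal_avoiding_def)

end

definition image_struct :: "('a \<Rightarrow> 'b) \<Rightarrow> 'a ms_struct \<Rightarrow> 'b ms_struct" where
  "image_struct h M =
    (let g = inv_into (carrier M) h in
     \<lparr>carrier = h ` carrier M, zero = h (zero M), one = h (one M),
      add = \<lambda>a b. h (add M (g a) (g b)), mul = \<lambda>a b. h (mul M (g a) (g b)),
      neg = \<lambda>a. h (neg M (g a)), inv = \<lambda>a. h (inv M (g a)), sgn = \<lambda>a. h (sgn M (g a))\<rparr>)"

lemma carrier_image_struct: "carrier (image_struct h M) = h ` carrier M"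
  by (simp add: image_struct_def Let_def)

context
  fixes M :: "'a ms_struct" and h :: "'a \<Rightarrow> 'b"
  assumes M: "is_struct M" and h: "inj_on h (carrier M)"
begin

lemma eval_image_struct:
  assumes v: "\<forall>n. v n \<in> carrier M"
  shows "eval (image_struct h M) (h \<circ> v) t = h (eval M v t)"
  by (induction t)
    (simp_all add: image_struct_def Let_def inv_into_f_f[OF h] eval_closed[OF M v])

lemma holds_image_struct: "holds (image_struct h M) t u \<longleftrightarrow> holds M t u"
proof
  assume hu: "holds (image_struct h M) t u"
  show "holds M t u" unfolding holds_def
  proof (intro allI impI)
    fix v :: "nat \<Rightarrow> 'a" assume v: "\<forall>n. v n \<in> carrier M"
    then have "\<forall>n. (h \<circ> v) n \<in> carrier (image_struct h M)"
      by (simp add: carrier_image_struct)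
    then have "h (eval M v t) = h (eval M v u)"
      using hu by (simp add: holds_def eval_image_struct[OF v, symmetric])
    then show "eval M v t = eval M v u"
      using inj_onD[OF h] eval_closed[OF M v] by blast
  qed
next
  assume hu: "holds M t u"
  show "holds (image_struct h M) t u" unfolding holds_def
  proof (intro allI impI)
    fix w :: "nat \<Rightarrow> 'b" assume w: "\<forall>n. w n \<in> carrier (image_struct h M)"
    define v where "v = inv_into (carrier M) h \<circ> w"
    have v: "\<forall>n. v n \<in> carrier M" and hv: "h \<circ> v = w"
      using w by (auto simp: v_def carrier_image_struct inv_into_into f_inv_into_f)
    show "eval (image_struct h M) w t = eval (image_struct h M) w u"
      using eval_image_struct[OF v] hu v by (simp add: hv[symmetric] holds_def)
  qed
qed

lemma image_struct_model:
  assumes "is_model M"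
  shows "is_model (image_struct h M)"
proof -
  have "is_struct (image_struct h M)"
    using M by (auto simp: is_struct_def image_struct_def Let_def inv_into_into)
  moreover have "satisfies_eqs (image_struct h M) (Md \<union> Signs)"
    using assms holds_image_struct by (auto simp: is_model_def satisfies_eqs_def)
  moreover have "satisfies_IL (image_struct h M)"
    unfolding satisfies_IL_def
  proof (intro ballI impI)
    fix n assume "n \<in> carrier (image_struct h M)" and "n \<noteq> zero (image_struct h M)"
    then obtain a where a: "a \<in> carrier M" "n = h a" and "a \<noteq> zero M"
      by (auto simp: image_struct_def Let_def)
    then have "mul M a (inv M a) = one M"
      using assms by (simp add: is_model_def satisfies_IL_def)
    moreover have "inv M a \<in> carrier M" using M a by (simp add: is_struct_def)
    ultimately show "mul (image_struct h M) n (inv (image_struct h M) n) = one (image_struct h M)"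
      using a by (simp add: image_struct_def Let_def inv_into_f_f[OF h])
  qed
  ultimately show ?thesis by (simp add: is_model_def)
qed

end

lemma derivable_equivp: "equivp (derivable (Md \<union> Signs))"
  by (intro equivpI reflpI sympI transpI) (auto intro: derivable.intros)

quotient_type tq = tm / "derivable (Md \<union> Signs)"
  by (rule derivable_equivp)

lemma derivable_instance:
  fixes a b c :: tm
  assumes "(l, r) \<in> Md \<union> Signs"
  defines "\<sigma> \<equiv> \<lambda>n. if n = 0 then a else if n = 1 then b else c"
  shows "derivable (Md \<union> Signs) (subst \<sigma> l) (subst \<sigma> r)"
  using assms(1) by (rule derivable.ax)

instantiation tq :: comm_ring_1
begin

lift_definition zero_tq :: tq is Zero .
lift_definition one_tq :: tq is One .
lift_definition plus_tq :: "tq \<Rightarrow> tq \<Rightarrow> tq" is Plus by (rule derivable.cong_Plus)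
lift_definition times_tq :: "tq \<Rightarrow> tq \<Rightarrow> tq" is Times by (rule derivable.cong_Times)
lift_definition uminus_tq :: "tq \<Rightarrow> tq" is Neg by (rule derivable.cong_Neg)
lift_definition minus_tq :: "tq \<Rightarrow> tq \<Rightarrow> tq" is "\<lambda>a b. Plus a (Neg b)"
  by (intro derivable.cong_Plus derivable.cong_Neg)

lemma tq_add_assoc: "(a::tq) + b + c = a + (b + c)"
  by transfer (use derivable_instance[of "Plus (Plus x y) z" "Plus x (Plus y z)"] in \<open>simp add: Md_def\<close>)
lemma tq_add_comm: "(a::tq) + b = b + a"
  by transfer (use derivable_instance[of "Plus x y" "Plus y x"] in \<open>simp add: Md_def\<close>)
lemma tq_add_zero: "(a::tq) + 0 = a"
  by transfer (use derivable_instance[of "Plus x Zero" x] in \<open>simp add: Md_def\<close>)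
lemma tq_add_neg: "(a::tq) + - a = 0"
  by transfer (use derivable_instance[of "Plus x (Neg x)" Zero] in \<open>simp add: Md_def\<close>)
lemma tq_mult_assoc: "(a::tq) * b * c = a * (b * c)"
  by transfer (use derivable_instance[of "Times (Times x y) z" "Times x (Times y z)"] in \<open>simp add: Md_def\<close>)
lemma tq_mult_comm: "(a::tq) * b = b * a"
  by transfer (use derivable_instance[of "Times x y" "Times y x"] in \<open>simp add: Md_def\<close>)
lemma tq_one_mult: "1 * (a::tq) = a"
  by transfer (use derivable_instance[of "Times One x" x] in \<open>simp add: Md_def\<close>)
lemma tq_distrib: "(a::tq) * (b + c) = a * b + a * c"
  by transfer (use derivable_instance[of "Times x (Plus y z)" "Plus (Times x y) (Times x z)"] in \<open>simp add: Md_def\<close>)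

instance
proof
  fix a b c :: tq
  show "a + b + c = a + (b + c)" by (rule tq_add_assoc)
  show "a + b = b + a" by (rule tq_add_comm)
  show "0 + a = a" using tq_add_comm tq_add_zero by metis
  show "- a + a = 0" using tq_add_comm tq_add_neg by metis
  show "a - b = a + - b" by transfer (rule derivable.refl)
  show "a * b * c = a * (b * c)" by (rule tq_mult_assoc)
  show "a * b = b * a" by (rule tq_mult_comm)
  show "1 * a = a" by (rule tq_one_mult)
  show "(a + b) * c = a * c + b * c" using tq_distrib tq_mult_comm by metis
  show "(0::tq) \<noteq> 1" by transfer (rule not_derivable_zero_one)
qed

end

lift_definition tq_inv :: "tq \<Rightarrow> tq" is Inv by (rule derivable.cong_Inv)
lift_definition tq_sgn :: "tq \<Rightarrow> tq" is Sgn by (rule derivable.cong_Sgn)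

interpretation terms: signed_meadow tq_inv tq_sgn
proof
  fix a b :: tq
  show "tq_inv (tq_inv a) = a"
    by transfer (use derivable_instance[of "Inv (Inv x)" x] in \<open>simp add: Md_def\<close>)
  show "a * (a * tq_inv a) = a"
    by transfer (use derivable_instance[of "Times x (Times x (Inv x))" x] in \<open>simp add: Md_def\<close>)
  show "tq_sgn (1 - a * tq_inv a) = 1 - a * tq_inv a"
    by transfer
      (use derivable_instance[of "Sgn (zero_of x)" "zero_of x"] in
        \<open>simp add: Signs_def zero_of_def one_of_def\<close>)
  show "tq_sgn (a * b) = tq_sgn a * tq_sgn b"
    by transfer (use derivable_instance[of "Sgn (Times x y)" "Times (Sgn x) (Sgn y)"] in \<open>simp add: Signs_def\<close>)
qed

lemma eval_terms_subst: "eval terms.ring_struct w t = abs_tq (subst (\<lambda>k. rep_tq (w k)) t)"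
  by (induction t)
    (simp_all add: terms.ring_struct_def Quotient3_abs_rep[OF Quotient3_tq] zero_tq.abs_eq
      one_tq.abs_eq plus_tq.abs_eq times_tq.abs_eq uminus_tq.abs_eq tq_inv.abs_eq tq_sgn.abs_eq)

lemma eval_terms_vars: "eval terms.ring_struct (\<lambda>k. abs_tq (Var k)) t = abs_tq t"
  by (induction t)
    (simp_all add: terms.ring_struct_def zero_tq.abs_eq one_tq.abs_eq plus_tq.abs_eq
      times_tq.abs_eq uminus_tq.abs_eq tq_inv.abs_eq tq_sgn.abs_eq)

lemma terms_satisfies: "satisfies_eqs terms.ring_struct (Md \<union> Signs)"
  unfolding satisfies_eqs_def holds_def eval_terms_subst tq.abs_eq_iff
  by (auto intro: derivable.ax)

lemma terms_quot_holds:
  assumes I: "ideal I" and "holds (terms.quot_struct I) r s"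
  shows "abs_tq r - abs_tq s \<in> I"
proof -
  let ?v = "\<lambda>n. mod_rep I (abs_tq (Var n))"
  have "\<forall>n. ?v n \<in> carrier (terms.quot_struct I)" by (simp add: terms.quot_struct_def)
  then have "eval (terms.quot_struct I) ?v r = eval (terms.quot_struct I) ?v s"
    using assms(2) by (simp add: holds_def)
  then have "mod_rep I (abs_tq r) = mod_rep I (abs_tq s)"
    by (simp add: terms.eval_quot_struct[OF I] eval_terms_vars)
  then show ?thesis by (simp add: mod_rep_eq_iff[OF I])
qed

text \<open>The term algebra is countable, so its quotients can be copied into \<open>nat\<close>.\<close>

instance tm :: countable by countable_datatype

instance tq :: countable
proof (rule countable_classI[of "to_nat \<circ> rep_tq"])
  fix a b :: tq
  assume "(to_nat \<circ> rep_tq) a = (to_nat \<circ> rep_tq) b"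
  then show "a = b" by (simp add: Quotient3_rel_rep[OF Quotient3_tq, symmetric] derivable.refl)
qed

theorem corollary2:
  fixes r s :: tm
  shows "(derivable (Md \<union> Signs) r s \<longrightarrow>
            (\<forall>M :: 'a ms_struct. is_model M \<longrightarrow> holds M r s))
       \<and> ((\<forall>M :: nat ms_struct. is_model M \<longrightarrow> holds M r s) \<longrightarrow>
            derivable (Md \<union> Signs) r s)"
proof (intro conjI impI allI)
  fix M :: "'a ms_struct"
  assume "derivable (Md \<union> Signs) r s" and "is_model M"
  then show "holds M r s" using derivable_sound by (auto simp: is_model_def)
next
  assume valid: "\<forall>M :: nat ms_struct. is_model M \<longrightarrow> holds M r s"
  show "derivable (Md \<union> Signs) r s"
  proof (rule ccontr)
    assume "\<not> derivable (Md \<union> Signs) r s"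
    then have "abs_tq r - abs_tq s \<noteq> 0" by (simp add: tq.abs_eq_iff)
    then obtain I where max: "maximal_avoiding I (abs_tq r - abs_tq s)"
      using exists_maximal_avoiding by blast
    let ?Q = "terms.quot_struct I"
    have Q: "is_model ?Q" by (rule terms.quot_struct_model[OF max terms_satisfies])
    have inj: "inj_on to_nat (carrier ?Q)" by (simp add: inj_on_def)
    have "holds (image_struct to_nat ?Q) r s"
      using valid image_struct_model[OF _ inj Q] Q by (simp add: is_model_def)
    then have "holds ?Q r s"
      using holds_image_struct[OF _ inj] Q by (simp add: is_model_def)
    then show False using terms_quot_holds max by (auto simp: maximal_avoiding_def)
  qed
qed

end
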